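(* Assume $\mathfrak p<\mathfrak t$ and let $\lambda=\mathfrak p$. Let $\mathcal B\subseteq[\omega]^{\aleph_0}$ exemplify $\mathfrak p$. Then there exist a regular cardinal $\kappa<\lambda$ and a $\subseteq^*$-decreasing sequence $\langle A_i:i<\kappa\rangle$ of members of $[\omega]^{\aleph_0}$ (i.e. $A_j\subseteq^* A_i$ for $i<j<\kappa$) such that (a) $A_i\cap B$ is infinite for every $i<\kappa$ and every $B\in\mathcal B$, and (b) if $A\in[\omega]^{\aleph_0}$ is a pseudo-intersection of $\{A_i:i<\kappa\}$, then $A\cap B$ is finite for some $B\in\mathcal B$.
   Context: $[\omega]^{\aleph_0}$ is the set of infinite subsets of $\omega$; for $A,B\subseteq\omega$, $A\subseteq^* B$ means $A\setminus B$ is finite. A set $A\in[\omega]^{\aleph_0}$ is a pseudo-intersection of a family $\mathcal C\subseteq[\omega]^{\aleph_0}$ if $A\subseteq^* C$ for all $C\in\mathcal C$. A tower is a sequence $\langle X_\alpha:\alpha<\kappa\rangle\subseteq[\omega]^{\aleph_0}$ with $X_\beta\subseteq^*X_\alpha$ for $\alpha<\beta<\kappa$ and such that $\{X_\alpha:\alpha<\kappa\}$ has no pseudo-intersection. $\mathfrak p$ is the least cardinality of a family $\mathcal B\subseteq[\omega]^{\aleph_0}$ all of whose finite subfamilies have infinite intersection but which has no pseudo-intersection; $\mathfrak t$ is the least length of a tower. A family $\mathcal B\subseteq[\omega]^{\aleph_0}$ exemplifies $\mathfrak p$ if it is closed under finite intersections, has no pseudo-intersection, and $|\mathcal B|=\mathfrak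 p$. *)

theory Defs
  imports Main
begin

definition almost_subset :: "nat set \<Rightarrow> nat set \<Rightarrow> bool" where
  "almost_subset A B \<longleftrightarrow> finite (A - B)"

definition pseudo_intersection :: "nat set \<Rightarrow> nat set set \<Rightarrow> bool" where
  "pseudo_intersection A \<C> \<longleftrightarrow> infinite A \<and> (\<forall>C\<in>\<C>. almost_subset A C)"

definition sfip :: "nat set set \<Rightarrow> bool" where
  "sfip \<C> \<longleftrightarrow> (\<forall>C\<in>\<C>. infinite C) \<and>
     (\<forall>F. F \<subseteq> \<C> \<and> finite F \<and> F \<noteq> {} \<longrightarrow> infinite (\<Inter>F))"

text \<open>Families whose cardinalities \<pp> is the least of.\<close>
definition p_family :: "nat set set \<Rightarrow> bool" where
  "p_family \<C> \<longleftrightarrow> sfip \<C> \<and> \<not> (\<exists>A. pseudo_intersection A \<C>)"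

definition tower :: "'j rel \<Rightarrow> ('j \<Rightarrow> nat set) \<Rightarrow> bool" where
  "tower r X \<longleftrightarrow> Well_order r \<and> (\<forall>\<alpha>\<in>Field r. infinite (X \<alpha>)) \<and>
     (\<forall>\<alpha> \<beta>. (\<alpha>, \<beta>) \<in> r \<and> \<alpha> \<noteq> \<beta> \<longrightarrow> almost_subset (X \<beta>) (X \<alpha>)) \<and>
     \<not> (\<exists>A. pseudo_intersection A (X ` Field r))"

text \<open>\<pp> < \<tt>: some family witnessing the definition of \<pp> (hence also one of size \<pp>)
  has cardinality strictly below the length of every tower.  Since \<tt> \<le> \<cc>,
  towers indexed by well-orders on subsets of nat set suffice.\<close>
definition p_less_t :: bool where
  "p_less_t \<longleftrightarrow> (\<exists>\<F>. p_family \<F> \<and>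
     (\<forall>(r :: nat set rel) X. tower r X \<longrightarrow> (card_of \<F>, r) \<in> ordLess))"

definition exemplifies_p :: "nat set set \<Rightarrow> bool" where
  "exemplifies_p \<B> \<longleftrightarrow> (\<forall>B\<in>\<B>. infinite B) \<and>
     (\<forall>B1\<in>\<B>. \<forall>B2\<in>\<B>. B1 \<inter> B2 \<in> \<B>) \<and>
     \<not> (\<exists>A. pseudo_intersection A \<B>) \<and>
     (\<forall>\<F>. p_family \<F> \<longrightarrow> (card_of \<B>, card_of \<F>) \<in> ordLeq)"

end

theory Submission
  imports Defs
begin

(* Well-order the family B in order type |B| = p and choose, by transfinite recursion along
   this order, almost-decreasing sets almost contained in the successive members of B and
   meeting every member of B in an infinite set.  If this never got stuck, the result would be
   a tower of length p < t, since B has no pseudo-intersection.  So it gets stuck at some c,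
   and the sets chosen before c satisfy (a) and (b): a pseudo-intersection X meeting all of B
   infinitely would let the recursion continue with X \<inter> c, as B is closed under intersections.
   Now take a shortest well-order kappa carrying a sequence with (a) and (b).  Both properties
   survive restriction to a cofinal subset, and every cofinal subset K of kappa contains a
   cofinal subset of order type at most |K|; hence kappa \<le> |K| for every cofinal K, i.e. kappa
   is a regular cardinal.  It is infinite because a last term would itself violate (b). *)

unbundle cardinal_syntax

context wo_rel
begin

lemma compat_inj_inflationary:
  assumes maps: "f ` Field r \<subseteq> Field r" and mono: "compat r r f"
    and inj: "inj_on f (Field r)" and x: "x \<in> Field r"
  shows "(x, f x) \<in> r"
proof (rule ccontr)
  let ?Bad = "{z \<in> Field r. (z, f z) \<notin> r}"
  assume "(x, f x) \<notin> r"
  with x have "x \<in> ?Bad" by blast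
  then obtain y where y: "y \<in> ?Bad" and least: "\<And>z. (z, y) \<in> r - Id \<Longrightarrow> z \<notin> ?Bad"
    by (rule wfE_min[OF WF]) blast
  have fy: "f y \<in> Field r" using maps y by blast
  have "(f y, y) \<in> r" using y fy TOTALS by blast
  moreover have "f y \<noteq> y" using y REFL by (auto simp: refl_on_def)
  ultimately have below: "(f y, y) \<in> r - Id" by blast
  then have "(f (f y), f y) \<in> r" using mono unfolding compat_def by blast
  moreover have "f (f y) \<noteq> f y" using inj below fy y by (auto dest: inj_onD)
  ultimately have "(f y, f (f y)) \<notin> r" using ANTISYM unfolding antisym_def by blast
  then show False using least[OF below] fy by blast
qed

lemma Restr_ordLeq: "Restr r A \<le>o r"
  \<comment> \<open>Otherwise r embeds onto a proper initial segment of Restr r A, bounded by some a;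
    the embedding is inflationary, yet it maps a below a.\<close>
proof (rule ccontr)
  let ?s = "Restr r A"
  have wo_s: "Well_order ?s" using WELL by (rule Well_order_Restr)
  interpret s: wo_rel ?s using wo_s by (simp add: wo_rel_def)
  assume "\<not> ?s \<le>o r"
  then have "r <o ?s" using ordLess_or_ordLeq[OF WELL wo_s] by blast
  then obtain f where emb: "embed r ?s f" and not_bij: "\<not> bij_betw f (Field r) (Field ?s)"
    unfolding ordLess_def embedS_def by blast
  have Field_s: "Field ?s \<subseteq> Field r" by (auto simp: Field_def)
  have img: "f ` Field r \<subseteq> Field ?s" using emb by (rule embed_Field)
  have inj: "inj_on f (Field r)" using WELL emb by (rule embed_inj_on)
  have ofilter: "s.ofilter (f ` Field r)" using WELL wo_s emb by (rule embed_Field_ofilter)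
  have mono: "compat r r f" using embed_compat[OF emb] unfolding compat_def by blast
  obtain a where a: "a \<in> Field ?s" "a \<notin> f ` Field r"
    using not_bij img inj unfolding bij_betw_def by blast
  have "(f a, a) \<in> r \<and> f a \<noteq> a"
  proof -
    have fa: "f a \<in> Field ?s" using img a Field_s by blast
    have "(a, f a) \<notin> ?s"
      using ofilter a fa Field_s unfolding s.ofilter_def under_def by blast
    then have "(f a, a) \<in> ?s" using s.TOTALS a fa by blast
    moreover have "f a \<noteq> a" using a Field_s by (metis image_eqI subsetD)
    ultimately show ?thesis by blast
  qed
  moreover have "(a, f a) \<in> r"
    using compat_inj_inflationary img Field_s mono inj a by blast
  ultimately show False using ANTISYM unfolding antisym_def by blast
qed

lemma cofinal_subset_ordLeq_card_of:
  assumes K: "K \<subseteq> Field r" and cofinal: "\<forall>a\<in>Field r. \<exists>k\<in>K. (a, k) \<in> r"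
  shows "\<exists>K'\<subseteq>K. (\<forall>a\<in>Field r. \<exists>k\<in>K'. (a, k) \<in> r) \<and> Restr r K' \<le>o card_of K"
proof -
  interpret s: wo_rel "card_of K" by (simp add: wo_rel_def card_of_Well_order)
  have Field_s: "Field (card_of K) = K" by (rule Field_card_of)
  \<comment> \<open>The records of K: elements of K lying r-above all their predecessors in
    the well-order card_of K.  On them r and card_of K agree.\<close>
  define K' where "K' = {x \<in> K. \<forall>y. (y, x) \<in> card_of K - Id \<longrightarrow> (y, x) \<in> r}"
  have s_imp_r: "(x, y) \<in> r" if "(x, y) \<in> card_of K" "x \<in> K'" "y \<in> K'" for x y
    using that K REFL unfolding K'_def refl_on_def by (cases "x = y") auto
  have Restr_eq: "Restr r K' = Restr (card_of K) K'"
  proof (intro set_eqI iffI)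
    fix p assume p: "p \<in> Restr r K'"
    then obtain x y where xy: "p = (x, y)" "x \<in> K'" "y \<in> K'" "(x, y) \<in> r" by blast
    have "(x, y) \<in> card_of K"
    proof (rule ccontr)
      assume "(x, y) \<notin> card_of K"
      moreover have "x \<in> K" "y \<in> K" using xy unfolding K'_def by auto
      ultimately have "(y, x) \<in> card_of K" "x \<noteq> y" using s.TOTALS s.REFL Field_s
        by (auto simp: refl_on_def)
      then show False using s_imp_r xy ANTISYM unfolding antisym_def by blast
    qed
    then show "p \<in> Restr (card_of K) K'" using xy by blast
  qed (use s_imp_r in blast)
  have cofinal': "\<exists>k\<in>K'. (a, k) \<in> r" if a: "a \<in> Field r" for a
  proof -
    obtain k0 where k0: "k0 \<in> {k \<in> K. (a, k) \<in> r}" using cofinal a by blast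
    obtain x where "x \<in> {k \<in> K. (a, k) \<in> r}"
      and least: "\<And>y. (y, x) \<in> card_of K - Id \<Longrightarrow> y \<notin> {k \<in> K. (a, k) \<in> r}"
      by (rule wfE_min[OF s.WF k0]) blast
    then have x: "x \<in> K" "(a, x) \<in> r" by auto
    have "(y, x) \<in> r" if "(y, x) \<in> card_of K - Id" for y
    proof -
      have "y \<in> K" using that Field_s by (auto simp: Field_def)
      then have "(y, a) \<in> r" using least[OF that] TOTALS a K by blast
      then show ?thesis using x TRANS unfolding trans_def by blast
    qed
    then show ?thesis using x unfolding K'_def by blast
  qed
  have "Restr r K' \<le>o card_of K" unfolding Restr_eq by (rule s.Restr_ordLeq)
  moreover have "K' \<subseteq> K" unfolding K'_def by blast
  ultimately show ?thesis using cofinal' by blast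
qed

lemma infinite_Field_if_no_greatest:
  assumes "Field r \<noteq> {}" and no_greatest: "\<forall>a\<in>Field r. \<exists>b. (a, b) \<in> r - Id"
  shows "infinite (Field r)"
proof
  assume "finite (Field r)"
  moreover have "r - Id \<subseteq> Field r \<times> Field r" by (auto intro: FieldI1 FieldI2)
  ultimately have "finite (r - Id)" by (blast intro: finite_subset)
  then have "wf ((r - Id)\<inverse>)" using wf_acyclic[OF WF] by (rule finite_acyclic_wf_converse)
  then obtain m where m: "m \<in> Field r" and maximal: "\<And>b. (b, m) \<in> (r - Id)\<inverse> \<Longrightarrow> b \<notin> Field r"
    using assms(1) by (rule wfE_min') blast
  obtain b where "(m, b) \<in> r - Id" using no_greatest m by blast
  then show False using maximal by (blast intro: FieldI2)
qed

lemma Card_order_regularCard_if_cofinal_ordLeq: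
  assumes "\<And>K. K \<subseteq> Field r \<Longrightarrow> \<forall>a\<in>Field r. \<exists>k\<in>K. (a, k) \<in> r \<Longrightarrow> r \<le>o card_of K"
  shows "Card_order r \<and> regularCard r"
proof
  have "\<forall>a\<in>Field r. \<exists>k\<in>Field r. (a, k) \<in> r" using REFL by (auto simp: refl_on_def)
  then have "r \<le>o card_of (Field r)" using assms by blast
  then show "Card_order r" by (simp add: Card_order_iff_ordLeq_card_of)
  show "regularCard r" unfolding regularCard_def
  proof (intro allI impI)
    fix K assume K: "K \<subseteq> Field r \<and> cofinal K r"
    have "\<forall>a\<in>Field r. \<exists>k\<in>K. (a, k) \<in> r" using K unfolding cofinal_def by blast
    then have "r \<le>o card_of K" using assms K by blast
    moreover have "card_of K \<le>o r"
      using K ordLeq_transitive[OF card_of_mono1 card_of_least[OF WELL]] by blast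
    ultimately show "card_of K =o r" by (simp add: ordIso_iff_ordLeq)
  qed
qed

end

lemma almost_subset_refl: "almost_subset A A"
  unfolding almost_subset_def by simp

lemma subset_imp_almost_subset: "A \<subseteq> B \<Longrightarrow> almost_subset A B"
  unfolding almost_subset_def by (metis Diff_eq_empty_iff finite.emptyI)

lemma almost_subset_trans:
  "almost_subset A B \<Longrightarrow> almost_subset B C \<Longrightarrow> almost_subset A C"
  unfolding almost_subset_def by (rule finite_subset[of _ "(A - B) \<union> (B - C)"]) auto

definition compatible :: "nat set set \<Rightarrow> nat set \<Rightarrow> bool" where
  "compatible \<B> X \<longleftrightarrow> (\<forall>B\<in>\<B>. infinite (X \<inter> B))"

lemma compatible_infinite: "compatible \<B> X \<Longrightarrow> B \<in> \<B> \<Longrightarrow> infinite X"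
  unfolding compatible_def by (meson finite_Int)

lemma compatible_Int:
  assumes "compatible \<B> X" and "C \<in> \<B>" and "\<forall>B1\<in>\<B>. \<forall>B2\<in>\<B>. B1 \<inter> B2 \<in> \<B>"
  shows "compatible \<B> (X \<inter> C)"
  using assms unfolding compatible_def by (metis Int_assoc)

definition almost_decreasing :: "'i rel \<Rightarrow> ('i \<Rightarrow> nat set) \<Rightarrow> bool" where
  "almost_decreasing r A \<longleftrightarrow> (\<forall>i j. (i, j) \<in> r \<and> i \<noteq> j \<longrightarrow> almost_subset (A j) (A i))"

definition maximal_compatible_chain :: "nat set set \<Rightarrow> 'i rel \<Rightarrow> ('i \<Rightarrow> nat set) \<Rightarrow> bool" where
  "maximal_compatible_chain \<B> r A \<longleftrightarrow> Well_order r \<and> almost_decreasing r A \<and>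
     (\<forall>i\<in>Field r. compatible \<B> (A i)) \<and>
     (\<forall>X. pseudo_intersection X (A ` Field r) \<longrightarrow> \<not> compatible \<B> X)"

lemma maximal_compatible_chain_Restr:
  assumes chain: "maximal_compatible_chain \<B> r A" and K: "K \<subseteq> Field r"
    and cofinal: "\<forall>a\<in>Field r. \<exists>k\<in>K. (a, k) \<in> r"
  shows "maximal_compatible_chain \<B> (Restr r K) A"
proof -
  have wo: "Well_order r" and decreasing: "almost_decreasing r A"
    using chain unfolding maximal_compatible_chain_def by blast+
  have Field_Restr: "Field (Restr r K) = K"
    using K wo by (simp add: Refl_Field_Restr2 order_on_defs)
  have "pseudo_intersection X (A ` Field r)" if X: "pseudo_intersection X (A ` K)" for X
    unfolding pseudo_intersection_def
  proof (intro conjI ballI)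
    show "infinite X" using X unfolding pseudo_intersection_def by blast
    fix C assume "C \<in> A ` Field r"
    then obtain i where i: "i \<in> Field r" "C = A i" by blast
    obtain k where k: "k \<in> K" "(i, k) \<in> r" using cofinal i by blast
    have "almost_subset X (A k)" using X k unfolding pseudo_intersection_def by blast
    moreover have "almost_subset (A k) (A i)"
      using decreasing k almost_subset_refl unfolding almost_decreasing_def by metis
    ultimately show "almost_subset X C" using i almost_subset_trans by blast
  qed
  moreover have "almost_decreasing (Restr r K) A"
    using decreasing unfolding almost_decreasing_def by blast
  ultimately show ?thesis
    using chain K Well_order_Restr[OF wo, of K]
    unfolding maximal_compatible_chain_def Field_Restr by blast
qed

lemma maximal_compatible_chain_infinite_Field:
  assumes chain: "maximal_compatible_chain \<B> r A"
    and B: "B \<in> \<B>" and infinite: "\<forall>B\<in>\<B>. infinite B"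
  shows "infinite (Field r)"
proof -
  interpret wo_rel r using chain unfolding maximal_compatible_chain_def wo_rel_def by blast
  have decreasing: "almost_decreasing r A"
    and compatible: "\<forall>i\<in>Field r. compatible \<B> (A i)"
    and maximal: "\<And>X. pseudo_intersection X (A ` Field r) \<Longrightarrow> \<not> compatible \<B> X"
    using chain unfolding maximal_compatible_chain_def by blast+
  have "Field r \<noteq> {}"
  proof
    assume "Field r = {}"
    then have "pseudo_intersection UNIV (A ` Field r)" unfolding pseudo_intersection_def by simp
    then have "\<not> compatible \<B> UNIV" by (rule maximal)
    then show False using infinite unfolding compatible_def by simp
  qed
  moreover have "\<exists>b. (a, b) \<in> r - Id" if a: "a \<in> Field r" for a
  proof (rule ccontr)
    assume greatest: "\<nexists>b. (a, b) \<in> r - Id"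
    have "almost_subset (A a) (A i)" if "i \<in> Field r" for i
    proof (cases "i = a")
      case False
      then have "(i, a) \<in> r" using greatest TOTALS a that by blast
      then show ?thesis using decreasing False unfolding almost_decreasing_def by blast
    qed (simp add: almost_subset_refl)
    moreover have "infinite (A a)" using compatible a B compatible_infinite by blast
    ultimately have "pseudo_intersection (A a) (A ` Field r)"
      unfolding pseudo_intersection_def by blast
    then show False using maximal compatible a by blast
  qed
  ultimately show ?thesis using infinite_Field_if_no_greatest by blast
qed

lemma minimal_maximal_compatible_chain_ordLeq_card_of:
  fixes r :: "'i rel"
  assumes chain: "maximal_compatible_chain \<B> r A"
    and minimal: "\<And>(r' :: 'i rel) A'. r' <o r \<Longrightarrow> \<not> maximal_compatible_chain \<B> r' A'"
    and K: "K \<subseteq> Field r" and cofinal: "\<forall>a\<in>Field r. \<exists>k\<in>K. (a, k) \<in> r"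
  shows "r \<le>o card_of K"
proof -
  have wo: "Well_order r" using chain unfolding maximal_compatible_chain_def by blast
  obtain K' where K': "K' \<subseteq> K" "\<forall>a\<in>Field r. \<exists>k\<in>K'. (a, k) \<in> r"
    and small: "Restr r K' \<le>o card_of K"
    using wo_rel.cofinal_subset_ordLeq_card_of[OF _ K cofinal] wo by (auto simp: wo_rel_def)
  have "maximal_compatible_chain \<B> (Restr r K') A"
    using maximal_compatible_chain_Restr[OF chain _ K'(2)] K'(1) K by blast
  then have "\<not> Restr r K' <o r" using minimal by blast
  then have "r \<le>o Restr r K'" using ordLess_or_ordLeq[OF Well_order_Restr[OF wo] wo] by blast
  then show ?thesis using small by (rule ordLeq_transitive)
qed

lemma exists_minimal_maximal_compatible_chain:
  fixes r0 :: "'i rel"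
  assumes "maximal_compatible_chain \<B> r0 A0"
  obtains r :: "'i rel" and A where "maximal_compatible_chain \<B> r A" and "r \<le>o r0"
    and "\<And>(r' :: 'i rel) A'. r' <o r \<Longrightarrow> \<not> maximal_compatible_chain \<B> r' A'"
proof -
  have "r0 \<in> {r. \<exists>A. maximal_compatible_chain \<B> r A}" using assms by blast
  then obtain r :: "'i rel" where r: "r \<in> {r. \<exists>A. maximal_compatible_chain \<B> r A}"
    and minimal: "\<And>r' :: 'i rel. r' <o r \<Longrightarrow> r' \<notin> {r. \<exists>A. maximal_compatible_chain \<B> r A}"
    by (rule wfE_min[OF wf_ordLess]) blast
  then obtain A where chain: "maximal_compatible_chain \<B> r A" by blast
  have "\<not> r0 <o r" using minimal assms by blast
  then have "r \<le>o r0"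
    using assms chain not_ordLeq_iff_ordLess unfolding maximal_compatible_chain_def by blast
  moreover have "\<not> maximal_compatible_chain \<B> r' A'" if "r' <o r" for r' :: "'i rel" and A'
    using minimal[OF that] by blast
  ultimately show thesis by (rule that[OF chain])
qed

definition admissible_term ::
  "nat set set \<Rightarrow> (nat set \<Rightarrow> nat set) \<Rightarrow> nat set \<Rightarrow> nat set \<Rightarrow> bool" where
  "admissible_term \<B> A c X \<longleftrightarrow> almost_subset X c \<and>
     (\<forall>b\<in>underS (card_of \<B>) c. almost_subset X (A b)) \<and> compatible \<B> X"

text \<open>Recursion along the well-order card_of \<B> of \<B>.  Where no admissible term exists,
  SOME picks an arbitrary set; this only happens once the recursion is stuck.\<close>

definition greedy_sequence :: "nat set set \<Rightarrow> nat set \<Rightarrow> nat set" where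
  "greedy_sequence \<B> = wo_rel.worec (card_of \<B>) (\<lambda>A c. SOME X. admissible_term \<B> A c X)"

lemma greedy_sequence_admissible:
  assumes "\<exists>X. admissible_term \<B> (greedy_sequence \<B>) c X"
  shows "admissible_term \<B> (greedy_sequence \<B>) c (greedy_sequence \<B> c)"
proof -
  interpret W: wo_rel "card_of \<B>" by (simp add: wo_rel_def card_of_Well_order)
  have "W.adm_wo (\<lambda>A c. SOME X. admissible_term \<B> A c X)"
    unfolding W.adm_wo_def admissible_term_def by simp
  then have "greedy_sequence \<B> c = (SOME X. admissible_term \<B> (greedy_sequence \<B>) c X)"
    unfolding greedy_sequence_def by (subst W.worec_fixpoint) simp_all
  then show ?thesis using assms by (metis someI_ex)
qed

lemma tower_greedy_sequence:
  assumes all: "\<forall>c\<in>\<B>. \<exists>X. admissible_term \<B> (greedy_sequence \<B>) c X"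
    and no_pi: "\<nexists>X. pseudo_intersection X \<B>"
  shows "tower (card_of \<B>) (greedy_sequence \<B>)"
proof -
  let ?A = "greedy_sequence \<B>"
  have admissible: "admissible_term \<B> ?A c (?A c)" if "c \<in> \<B>" for c
    using all that by (blast intro: greedy_sequence_admissible)
  have "\<forall>c\<in>\<B>. infinite (?A c)"
    using admissible compatible_infinite unfolding admissible_term_def by blast
  moreover have "almost_subset (?A c) (?A b)" if bc: "(b, c) \<in> card_of \<B>" "b \<noteq> c" for b c
  proof -
    have "c \<in> \<B>" using bc(1) Field_card_of FieldI2 by metis
    moreover have "b \<in> underS (card_of \<B>) c" using bc unfolding underS_def by blast
    ultimately show ?thesis using admissible unfolding admissible_term_def by blast
  qed
  moreover have "\<nexists>X. pseudo_intersection X (?A ` \<B>)"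
  proof
    assume "\<exists>X. pseudo_intersection X (?A ` \<B>)"
    then obtain X where X: "pseudo_intersection X (?A ` \<B>)" by blast
    have "almost_subset X c" if "c \<in> \<B>" for c
      using X that admissible almost_subset_trans
      unfolding pseudo_intersection_def admissible_term_def by blast
    then have "pseudo_intersection X \<B>" using X unfolding pseudo_intersection_def by blast
    then show False using no_pi by blast
  qed
  ultimately show ?thesis
    unfolding tower_def Field_card_of using card_of_well_order_on by blast
qed

lemma maximal_compatible_chain_greedy_sequence:
  assumes closed: "\<forall>B1\<in>\<B>. \<forall>B2\<in>\<B>. B1 \<inter> B2 \<in> \<B>"
    and c: "c \<in> \<B>" and stuck: "\<nexists>X. admissible_term \<B> (greedy_sequence \<B>) c X"
    and before: "\<forall>b\<in>underS (card_of \<B>) c. \<exists>X. admissible_term \<B> (greedy_sequence \<B>) b X"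
  shows "maximal_compatible_chain \<B> (Restr (card_of \<B>) (underS (card_of \<B>) c)) (greedy_sequence \<B>)"
proof -
  interpret W: wo_rel "card_of \<B>" by (simp add: wo_rel_def card_of_Well_order)
  let ?A = "greedy_sequence \<B>" and ?S = "underS (card_of \<B>) c"
  have admissible: "admissible_term \<B> ?A b (?A b)" if "b \<in> ?S" for b
    using before that by (blast intro: greedy_sequence_admissible)
  have Field_Restr: "Field (Restr (card_of \<B>) ?S) = ?S"
    using W.REFL Order_Relation.underS_Field by (rule Refl_Field_Restr2)
  have "almost_decreasing (Restr (card_of \<B>) ?S) ?A"
    unfolding almost_decreasing_def
  proof (intro allI impI)
    fix i j assume ij: "(i, j) \<in> Restr (card_of \<B>) ?S \<and> i \<noteq> j"
    then have "i \<in> underS (card_of \<B>) j" "j \<in> ?S" by (auto simp: underS_def)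
    then show "almost_subset (?A j) (?A i)" using admissible unfolding admissible_term_def by blast
  qed
  moreover have "\<not> compatible \<B> X" if X: "pseudo_intersection X (?A ` ?S)" for X
  proof
    assume "compatible \<B> X"
    then have "compatible \<B> (X \<inter> c)" using c closed by (rule compatible_Int)
    moreover have "almost_subset (X \<inter> c) (?A b)" if "b \<in> ?S" for b
      using X that subset_imp_almost_subset[of "X \<inter> c" X] almost_subset_trans
      unfolding pseudo_intersection_def by blast
    ultimately have "admissible_term \<B> ?A c (X \<inter> c)"
      unfolding admissible_term_def by (simp add: subset_imp_almost_subset)
    then show False using stuck by blast
  qed
  moreover have "\<forall>i\<in>?S. compatible \<B> (?A i)"
    using admissible unfolding admissible_term_def by blast
  ultimately show ?thesis
    unfolding maximal_compatible_chain_def Field_Restr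
    using Well_order_Restr[OF card_of_Well_order, of \<B> ?S] Field_Restr by simp
qed

lemma exists_maximal_compatible_chain:
  assumes closed: "\<forall>B1\<in>\<B>. \<forall>B2\<in>\<B>. B1 \<inter> B2 \<in> \<B>"
    and no_pi: "\<nexists>X. pseudo_intersection X \<B>"
    and no_tower: "\<And>T. \<not> tower (card_of \<B>) T"
  obtains r where "maximal_compatible_chain \<B> r (greedy_sequence \<B>)" and "r <o card_of \<B>"
proof -
  let ?A = "greedy_sequence \<B>"
  interpret W: wo_rel "card_of \<B>" by (simp add: wo_rel_def card_of_Well_order)
  define Stuck where "Stuck = {c \<in> \<B>. \<nexists>X. admissible_term \<B> ?A c X}"
  have "Stuck \<noteq> {}"
  proof
    assume "Stuck = {}"
    then have "\<forall>c\<in>\<B>. \<exists>X. admissible_term \<B> ?A c X" unfolding Stuck_def by blast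
    then have "tower (card_of \<B>) ?A" using no_pi by (rule tower_greedy_sequence)
    then show False using no_tower by blast
  qed
  then obtain c where "c \<in> Stuck" and least: "\<And>b. (b, c) \<in> card_of \<B> - Id \<Longrightarrow> b \<notin> Stuck"
    by (rule wfE_min'[OF W.WF]) blast
  then have c: "c \<in> \<B>" and stuck: "\<nexists>X. admissible_term \<B> ?A c X" unfolding Stuck_def by blast+
  have "\<exists>X. admissible_term \<B> ?A b X" if b: "b \<in> underS (card_of \<B>) c" for b
  proof -
    have "(b, c) \<in> card_of \<B> - Id" using b unfolding underS_def by blast
    moreover have "b \<in> \<B>"
      using b Order_Relation.underS_Field[of "card_of \<B>" c] unfolding Field_card_of by blast
    ultimately show ?thesis using least[of b] unfolding Stuck_def by blast
  qed
  then have "maximal_compatible_chain \<B> (Restr (card_of \<B>) (underS (card_of \<B>) c)) ?A"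
    using closed c stuck by (intro maximal_compatible_chain_greedy_sequence) blast+
  moreover have "Restr (card_of \<B>) (underS (card_of \<B>) c) <o card_of \<B>"
    using W.WELL by (rule underS_Restr_ordLess) (use c in \<open>auto simp: Field_card_of\<close>)
  ultimately show thesis by (rule that)
qed

lemma exemplifies_p_no_tower:
  assumes "p_less_t" and "exemplifies_p \<B>"
  shows "\<not> tower (card_of \<B>) T"
proof
  assume tower: "tower (card_of \<B>) T"
  obtain \<F> where "p_family \<F>"
    and shorter: "\<forall>(r :: nat set rel) X. tower r X \<longrightarrow> card_of \<F> <o r"
    using assms(1) unfolding p_less_t_def by blast
  then have "card_of \<B> \<le>o card_of \<F>" using assms(2) unfolding exemplifies_p_def by blast
  moreover have "card_of \<F> <o card_of \<B>" using shorter tower by blast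
  ultimately show False using not_ordLess_ordLeq by blast
qed

theorem proposition2p3:
  fixes \<B> :: "nat set set"
  assumes "p_less_t"
    and "exemplifies_p \<B>"
  shows "\<exists>(\<kappa> :: nat set rel) (A :: nat set \<Rightarrow> nat set).
           Cinfinite \<kappa> \<and> regularCard \<kappa> \<and> (\<kappa>, card_of \<B>) \<in> ordLess \<and>
           (\<forall>i\<in>Field \<kappa>. infinite (A i)) \<and>
           (\<forall>i j. (i, j) \<in> \<kappa> \<and> i \<noteq> j \<longrightarrow> almost_subset (A j) (A i)) \<and>
           (\<forall>i\<in>Field \<kappa>. \<forall>B\<in>\<B>. infinite (A i \<inter> B)) \<and>
           (\<forall>X. pseudo_intersection X (A ` Field \<kappa>) \<longrightarrow> (\<exists>B\<in>\<B>. finite (X \<inter> B)))"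
proof -
  have infinite: "\<forall>B\<in>\<B>. infinite B" and closed: "\<forall>B1\<in>\<B>. \<forall>B2\<in>\<B>. B1 \<inter> B2 \<in> \<B>"
    and no_pi: "\<nexists>X. pseudo_intersection X \<B>"
    using assms(2) unfolding exemplifies_p_def by blast+
  obtain B0 where B0: "B0 \<in> \<B>"
    using no_pi unfolding pseudo_intersection_def by (metis infinite_UNIV_nat)
  obtain r0 where chain0: "maximal_compatible_chain \<B> r0 (greedy_sequence \<B>)"
    and short: "r0 <o card_of \<B>"
    using exists_maximal_compatible_chain[OF closed no_pi exemplifies_p_no_tower[OF assms]] .
  obtain \<kappa> :: "nat set rel" and A where chain: "maximal_compatible_chain \<B> \<kappa> A"
    and "\<kappa> \<le>o r0"
    and minimal: "\<And>(r' :: nat set rel) A'. r' <o \<kappa> \<Longrightarrow> \<not> maximal_compatible_chain \<B> r' A'"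
    by (rule exists_minimal_maximal_compatible_chain[OF chain0]) blast
  have "wo_rel \<kappa>" using chain unfolding maximal_compatible_chain_def wo_rel_def by blast
  then have "Card_order \<kappa> \<and> regularCard \<kappa>"
    using minimal_maximal_compatible_chain_ordLeq_card_of[OF chain minimal]
    by (rule wo_rel.Card_order_regularCard_if_cofinal_ordLeq)
  moreover have "cinfinite \<kappa>"
    using maximal_compatible_chain_infinite_Field[OF chain B0 infinite] unfolding cinfinite_def .
  moreover have "\<kappa> <o card_of \<B>" using \<open>\<kappa> \<le>o r0\<close> short by (rule ordLeq_ordLess_trans)
  moreover have "\<forall>i\<in>Field \<kappa>. infinite (A i)"
    using chain B0 compatible_infinite unfolding maximal_compatible_chain_def by blast
  moreover have "\<forall>i j. (i, j) \<in> \<kappa> \<and> i \<noteq> j \<longrightarrow> almost_subset (A j) (A i)"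
    using chain unfolding maximal_compatible_chain_def almost_decreasing_def by blast
  moreover have "\<forall>i\<in>Field \<kappa>. \<forall>B\<in>\<B>. infinite (A i \<inter> B)"
    using chain unfolding maximal_compatible_chain_def compatible_def by blast
  moreover have "\<forall>X. pseudo_intersection X (A ` Field \<kappa>) \<longrightarrow> (\<exists>B\<in>\<B>. finite (X \<inter> B))"
    using chain unfolding maximal_compatible_chain_def compatible_def by blast
  ultimately show ?thesis by blast
qed

end
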